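(* Let $(k,|\cdot|)$ be an algebraically closed complete metrized field, $\mathbb{D}=\{|t|<1\}\subset k$, and let $P_t(z)=z^d+\alpha_1(t)z^{d-1}+\cdots+\alpha_d(t)$ with $d\ge2$ and $\alpha_i\in\mathcal{O}(\mathbb{D})[t^{-1}]$ (a meromorphic family of monic polynomials). Then there exist a constant $C>0$ and an integer $N\ge1$ such that the following holds: for every meromorphic function of the form $a(t)=t^{-l}(1+h(t))$ with $l\ge N$ an integer and $h$ analytic on $\mathbb{D}$ with $h(0)=0$ and $\sup_{\mathbb{D}}|h|\le\frac12$, one has $$\left|\frac1d\log|P_t(a(t))|-\log|a(t)|\right|\le C\quad\text{for all }0<|t|\le\tfrac12.$$
   Context: $\mathcal{O}(\mathbb{D})$ is the ring of analytic functions on $\mathbb{D}$ (power series converging on every disk of radius $\rho<1$); $\mathcal{O}(\mathbb{D})[t^{-1}]$ are meromorphic functions on $\mathbb{D}$ with poles only at $0$. *)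

theory Defs
  imports Complex_Main "HOL-Computational_Algebra.Polynomial"
begin

definition is_abs_value :: "('a::field \<Rightarrow> real) \<Rightarrow> bool" where
  "is_abs_value nrm \<longleftrightarrow>
     (\<forall>x. 0 \<le> nrm x) \<and> (\<forall>x. nrm x = 0 \<longleftrightarrow> x = 0) \<and>
     (\<forall>x y. nrm (x * y) = nrm x * nrm y) \<and>
     (\<forall>x y. nrm (x + y) \<le> nrm x + nrm y)"

definition abs_complete :: "('a::field \<Rightarrow> real) \<Rightarrow> bool" where
  "abs_complete nrm \<longleftrightarrow>
     (\<forall>X::nat \<Rightarrow> 'a. (\<forall>e>0. \<exists>M. \<forall>m\<ge>M. \<forall>n\<ge>M. nrm (X m - X n) < e) \<longrightarrow>
        (\<exists>L. (\<lambda>n. nrm (X n - L)) \<longlonglongrightarrow> 0))"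

definition alg_closed_field :: "'a::field itself \<Rightarrow> bool" where
  "alg_closed_field _ \<longleftrightarrow> (\<forall>p :: 'a poly. degree p \<ge> 1 \<longrightarrow> (\<exists>x. poly p x = 0))"

definition complete_metrized_acf :: "('a::field \<Rightarrow> real) \<Rightarrow> bool" where
  "complete_metrized_acf nrm \<longleftrightarrow>
     is_abs_value nrm \<and> abs_complete nrm \<and> alg_closed_field TYPE('a)"

definition abs_sums :: "('a::field \<Rightarrow> real) \<Rightarrow> (nat \<Rightarrow> 'a) \<Rightarrow> 'a \<Rightarrow> bool" where
  "abs_sums nrm f s \<longleftrightarrow> (\<lambda>N. nrm ((\<Sum>n<N. f n) - s)) \<longlonglongrightarrow> 0"

definition conv_on_unit_disk :: "('a::field \<Rightarrow> real) \<Rightarrow> (nat \<Rightarrow> 'a) \<Rightarrow> bool" where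
  "conv_on_unit_disk nrm c \<longleftrightarrow> (\<forall>\<rho>::real. 0 \<le> \<rho> \<and> \<rho> < 1 \<longrightarrow> summable (\<lambda>n. nrm (c n) * \<rho> ^ n))"

definition analytic_D :: "('a::field \<Rightarrow> real) \<Rightarrow> ('a \<Rightarrow> 'a) \<Rightarrow> bool" where
  "analytic_D nrm f \<longleftrightarrow>
     (\<exists>c. conv_on_unit_disk nrm c \<and> (\<forall>t. nrm t < 1 \<longrightarrow> abs_sums nrm (\<lambda>n. c n * t ^ n) (f t)))"

text \<open>f is in O(D)[t^{-1}]: meromorphic on D with poles only at 0
  (compared on the punctured disk 0 < |t| < 1).\<close>
definition meromorphic_D0 :: "('a::field \<Rightarrow> real) \<Rightarrow> ('a \<Rightarrow> 'a) \<Rightarrow> bool" where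
  "meromorphic_D0 nrm f \<longleftrightarrow>
     (\<exists>m::nat. \<exists>g. analytic_D nrm g \<and> (\<forall>t. 0 < nrm t \<and> nrm t < 1 \<longrightarrow> f t = inverse t ^ m * g t))"

definition Pfam :: "nat \<Rightarrow> (nat \<Rightarrow> 'a \<Rightarrow> 'a) \<Rightarrow> 'a \<Rightarrow> 'a \<Rightarrow> 'a::field" where
  "Pfam d \<alpha> t z = z ^ d + (\<Sum>i=1..d. \<alpha> i t * z ^ (d - i))"

end

theory Submission
  imports Defs
begin

text \<open>On \<open>0 < |t| \<le> 1/2\<close> each coefficient \<open>\<alpha>\<^sub>i\<close> is bounded by \<open>B |t|\<^sup>-\<^sup>M\<close> for one pair
  \<open>(M, B)\<close>: write it as \<open>t\<^sup>-\<^sup>m g\<close> and bound the power series of \<open>g\<close> on the closed disk of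
  radius 1/2. Since \<open>|1 + h(t)| \<in> [1/2, 3/2]\<close>, the point \<open>a = t\<^sup>-\<^sup>l(1 + h(t))\<close> has size
  about \<open>|t|\<^sup>-\<^sup>l\<close>, so once \<open>l\<close> exceeds \<open>M\<close> by enough, every lower term \<open>\<alpha>\<^sub>i a\<^sup>d\<^sup>-\<^sup>i\<close> is
  at most \<open>|a|\<^sup>d/(2d)\<close>. Hence \<open>|P\<^sub>t(a)| / |a|\<^sup>d \<in> [1/2, 3/2]\<close>, whose logarithm is bounded by 1.\<close>

lemma ln_root_ratio_bound:
  fixes A P :: real
  assumes "0 < A" "1 \<le> d" "A ^ d / 2 \<le> P" "P \<le> 3/2 * A ^ d"
  shows "\<bar>ln P / real d - ln A\<bar> \<le> 1"
proof -
  define q where "q = P / A ^ d"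
  have q: "1/2 \<le> q" "q \<le> 3/2" unfolding q_def using assms by (simp_all add: field_simps)
  have "ln q \<le> q - 1" and "ln (1 / q) \<le> 1 / q - 1" using q by (intro ln_le_minus_one; simp)+
  moreover have "ln (1 / q) = - ln q" and "1 / q \<le> 2" using q by (simp_all add: ln_div field_simps)
  ultimately have ln_q: "\<bar>ln q\<bar> \<le> 1" using q by linarith
  have "0 < A ^ d" using assms(1) by simp
  then have "P = q * A ^ d" unfolding q_def by (metis nonzero_eq_divide_eq less_irrefl)
  have "0 < q" using q by simp
  have "ln P = ln q + real d * ln A"
    using assms(1) \<open>0 < A ^ d\<close> \<open>0 < q\<close> \<open>P = q * A ^ d\<close> by (simp add: ln_mult ln_realpow)
  then have "\<bar>ln P / real d - ln A\<bar> = \<bar>ln q\<bar> / real d"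
    using assms(2) by (simp add: field_simps)
  also have "\<dots> \<le> \<bar>ln q\<bar>" using assms(2) by (simp add: divide_le_eq mult_le_cancel_left1)
  finally show ?thesis using ln_q by linarith
qed

context
  fixes nrm :: "'a::field \<Rightarrow> real"
  assumes av: "is_abs_value nrm"
begin

lemma abs_value_nonneg: "0 \<le> nrm x"
  and abs_value_eq_0_iff: "nrm x = 0 \<longleftrightarrow> x = 0"
  and abs_value_mult: "nrm (x * y) = nrm x * nrm y"
  and abs_value_triangle: "nrm (x + y) \<le> nrm x + nrm y"
  using av unfolding is_abs_value_def by blast+

lemma abs_value_zero: "nrm 0 = 0"
  by (simp add: abs_value_eq_0_iff)

lemma abs_value_one: "nrm 1 = 1"
proof -
  have "nrm 1 = nrm 1 * nrm 1" by (metis abs_value_mult mult_1)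
  moreover have "nrm 1 \<noteq> 0" by (simp add: abs_value_eq_0_iff)
  ultimately show ?thesis by simp
qed

lemma abs_value_minus: "nrm (- x) = nrm x"
proof -
  have "nrm (-1) ^ 2 = nrm ((-1) * (-1))" by (simp only: abs_value_mult power2_eq_square)
  then have "nrm (-1) ^ 2 = 1" by (simp add: abs_value_one)
  then have "nrm (-1) = 1" using abs_value_nonneg[of "-1"] by (auto simp: power2_eq_1_iff)
  then show ?thesis using abs_value_mult[of "-1" x] by simp
qed

lemma abs_value_power: "nrm (x ^ n) = nrm x ^ n"
  by (induction n) (simp_all add: abs_value_one abs_value_mult)

lemma abs_value_inverse: "nrm (inverse x) = inverse (nrm x)"
proof (cases "x = 0")
  case False
  then have "nrm x * nrm (inverse x) = 1" by (metis abs_value_mult abs_value_one right_inverse)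
  then show ?thesis by (metis inverse_unique)
qed (simp add: abs_value_zero)

lemma abs_value_sum_le: "nrm (\<Sum>i\<in>A. f i) \<le> (\<Sum>i\<in>A. nrm (f i))"
proof (induction A rule: infinite_finite_induct)
  case (insert x F)
  then show ?case by simp (metis abs_value_triangle add_left_mono order_trans)
qed (simp_all add: abs_value_zero)

lemma abs_value_add_small:
  assumes "nrm y \<le> nrm x / 2"
  shows "nrm x / 2 \<le> nrm (x + y)" and "nrm (x + y) \<le> 3/2 * nrm x"
proof -
  have "nrm x \<le> nrm (x + y) + nrm (- y)" by (metis abs_value_triangle add_diff_cancel diff_conv_add_uminus)
  then show "nrm x / 2 \<le> nrm (x + y)" using assms by (simp add: abs_value_minus)
  show "nrm (x + y) \<le> 3/2 * nrm x" using abs_value_triangle[of x y] assms by simp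
qed

lemma analytic_D_bounded:
  assumes g: "analytic_D nrm g" and \<rho>: "0 \<le> \<rho>" "\<rho> < 1"
  shows "\<exists>B\<ge>0. \<forall>t. nrm t \<le> \<rho> \<longrightarrow> nrm (g t) \<le> B"
proof -
  obtain c where "conv_on_unit_disk nrm c"
    and c: "\<forall>t. nrm t < 1 \<longrightarrow> abs_sums nrm (\<lambda>n. c n * t ^ n) (g t)"
    using g unfolding analytic_D_def by blast
  then have sm: "summable (\<lambda>n. nrm (c n) * \<rho> ^ n)" using \<rho> unfolding conv_on_unit_disk_def by blast
  define B where "B = (\<Sum>n. nrm (c n) * \<rho> ^ n)"
  have "B \<ge> 0" unfolding B_def using \<rho> by (intro suminf_nonneg sm) (simp add: abs_value_nonneg)
  moreover have "nrm (g t) \<le> B" if t: "nrm t \<le> \<rho>" for t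
  proof -
    let ?err = "\<lambda>N. nrm ((\<Sum>n<N. c n * t ^ n) - g t)"
    have "nrm (g t) \<le> B + ?err N" for N
    proof -
      have "nrm (g t) \<le> nrm (\<Sum>n<N. c n * t ^ n) + nrm (g t - (\<Sum>n<N. c n * t ^ n))"
        using abs_value_triangle[of "\<Sum>n<N. c n * t ^ n" "g t - (\<Sum>n<N. c n * t ^ n)"] by simp
      also have "nrm (g t - (\<Sum>n<N. c n * t ^ n)) = ?err N"
        by (metis abs_value_minus minus_diff_eq)
      also have "nrm (\<Sum>n<N. c n * t ^ n) \<le> (\<Sum>n<N. nrm (c n) * nrm t ^ n)"
        using abs_value_sum_le[of "\<lambda>n. c n * t ^ n" "{..<N}"] by (simp add: abs_value_mult abs_value_power)
      also have "\<dots> \<le> (\<Sum>n<N. nrm (c n) * \<rho> ^ n)"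
        using t by (intro sum_mono mult_left_mono power_mono) (simp_all add: abs_value_nonneg)
      also have "\<dots> \<le> B"
        unfolding B_def using \<rho> by (intro sum_le_suminf sm) (simp_all add: abs_value_nonneg)
      finally show ?thesis by simp
    qed
    moreover have "(\<lambda>N. B + ?err N) \<longlonglongrightarrow> B + 0"
      using c t \<rho> unfolding abs_sums_def by (intro tendsto_add tendsto_const) simp
    ultimately show ?thesis using LIMSEQ_le_const[of "\<lambda>N. B + ?err N"] by simp
  qed
  ultimately show ?thesis by blast
qed

lemma meromorphic_D0_pole_bound:
  assumes f: "meromorphic_D0 nrm f" and \<rho>: "0 \<le> \<rho>" "\<rho> < 1"
  shows "\<exists>m B. 0 \<le> B \<and> (\<forall>t. 0 < nrm t \<and> nrm t \<le> \<rho> \<longrightarrow> nrm (f t) \<le> B * inverse (nrm t) ^ m)"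
proof -
  obtain m g where g: "analytic_D nrm g"
    and f_eq: "\<forall>t. 0 < nrm t \<and> nrm t < 1 \<longrightarrow> f t = inverse t ^ m * g t"
    using f unfolding meromorphic_D0_def by blast
  obtain B where B: "0 \<le> B" "\<forall>t. nrm t \<le> \<rho> \<longrightarrow> nrm (g t) \<le> B"
    using analytic_D_bounded[OF g \<rho>] by blast
  have "nrm (f t) \<le> B * inverse (nrm t) ^ m" if "0 < nrm t" "nrm t \<le> \<rho>" for t
    using that f_eq \<rho> B(2) mult_left_mono[of "nrm (g t)" B "inverse (nrm t) ^ m"]
    by (simp add: abs_value_mult abs_value_power abs_value_inverse mult.commute)
  with B(1) show ?thesis by blast
qed

lemma meromorphic_D0_uniform_pole_bound:
  assumes "finite I" "\<forall>i\<in>I. meromorphic_D0 nrm (f i)" and \<rho>: "0 \<le> \<rho>" "\<rho> < 1"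
  shows "\<exists>m B. 0 \<le> B \<and>
    (\<forall>i\<in>I. \<forall>t. 0 < nrm t \<and> nrm t \<le> \<rho> \<longrightarrow> nrm (f i t) \<le> B * inverse (nrm t) ^ m)"
  using assms(1,2)
proof (induction I rule: finite_induct)
  case empty
  show ?case by blast
next
  case (insert j I)
  obtain m B where B: "0 \<le> B"
    and IH: "\<forall>i\<in>I. \<forall>t. 0 < nrm t \<and> nrm t \<le> \<rho> \<longrightarrow> nrm (f i t) \<le> B * inverse (nrm t) ^ m"
    using insert by blast
  obtain m' B' where B': "0 \<le> B'"
    and j: "\<forall>t. 0 < nrm t \<and> nrm t \<le> \<rho> \<longrightarrow> nrm (f j t) \<le> B' * inverse (nrm t) ^ m'"
    using meromorphic_D0_pole_bound[OF _ \<rho>] insert.prems by blast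
  have "nrm (f i t) \<le> (B + B') * inverse (nrm t) ^ (m + m')"
    if i: "i \<in> insert j I" and t: "0 < nrm t" "nrm t \<le> \<rho>" for i t
  proof -
    have s: "1 \<le> inverse (nrm t)" using t \<rho> by (simp add: one_le_inverse_iff)
    have "0 \<le> inverse (nrm t) ^ m" "0 \<le> inverse (nrm t) ^ m'" using t by simp_all
    have "inverse (nrm t) ^ m \<le> inverse (nrm t) ^ (m + m')"
      and "inverse (nrm t) ^ m' \<le> inverse (nrm t) ^ (m + m')"
      using s by (simp_all add: power_increasing)
    then have "B * inverse (nrm t) ^ m \<le> (B + B') * inverse (nrm t) ^ (m + m')"
      and "B' * inverse (nrm t) ^ m' \<le> (B + B') * inverse (nrm t) ^ (m + m')"
      using B B' s \<open>0 \<le> inverse (nrm t) ^ m\<close> \<open>0 \<le> inverse (nrm t) ^ m'\<close>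
      by (auto intro!: mult_mono)
    then show ?thesis using i IH j t by fastforce
  qed
  then show ?case using B B' by (metis add_nonneg_nonneg)
qed

lemma large_pole_dominates:
  assumes t: "0 < nrm t" "nrm t \<le> 1/2" and u: "1/2 \<le> nrm u"
    and c: "nrm c \<le> B * inverse (nrm t) ^ M" and B: "0 \<le> B"
    and n0: "K * B \<le> 2 ^ n0" and K: "0 \<le> K"
    and l: "M + n0 < l" and i: "1 \<le> i"
  shows "K * nrm c \<le> nrm (inverse t ^ l * u) ^ i"
proof -
  define s where "s = inverse (nrm t)"
  have s2: "2 \<le> s" unfolding s_def using t by (simp add: field_simps)
  have "K * nrm c \<le> K * B * s ^ M"
    using mult_left_mono[OF c K] unfolding s_def by (simp add: mult.assoc)
  also have "\<dots> \<le> s ^ M * 2 ^ n0"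
    using mult_right_mono[OF n0, of "s ^ M"] s2 by (simp add: mult.commute)
  finally have c_small: "K * nrm c \<le> s ^ M * 2 ^ n0" .
  have "s ^ M * 2 ^ n0 \<le> s ^ M * s ^ n0"
    using s2 by (intro mult_left_mono power_mono) auto
  also have "\<dots> = s ^ (Suc (M + n0)) / s" using s2 by (simp add: power_add)
  also have "\<dots> \<le> s ^ l / 2"
    using s2 l by (intro frac_le power_increasing) auto
  also have "\<dots> \<le> s ^ l * nrm u" using mult_left_mono[OF u, of "s ^ l"] s2 by simp
  also have "\<dots> = nrm (inverse t ^ l * u)"
    unfolding s_def by (simp add: abs_value_mult abs_value_power abs_value_inverse)
  finally have a_large: "s ^ M * 2 ^ n0 \<le> nrm (inverse t ^ l * u)" .
  have "1 \<le> s ^ M" using s2 by (simp add: one_le_power)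
  then have "1 * 1 \<le> s ^ M * 2 ^ n0" by (intro mult_mono) simp_all
  then have "nrm (inverse t ^ l * u) \<le> nrm (inverse t ^ l * u) ^ i"
    using a_large i by (metis mult_1 order_trans power_increasing power_one_right)
  with c_small a_large show ?thesis by linarith
qed

lemma Pfam_near_leading_term:
  assumes "\<forall>i\<in>{1..d}. 2 * real d * nrm (\<alpha> i t) \<le> nrm z ^ i"
  shows "nrm (Pfam d \<alpha> t z - z ^ d) \<le> nrm z ^ d / 2"
proof -
  have term_bound: "nrm (\<alpha> i t * z ^ (d - i)) \<le> nrm z ^ d / (2 * real d)" if i: "i \<in> {1..d}" for i
  proof -
    have "nrm (\<alpha> i t * z ^ (d - i)) = nrm (\<alpha> i t) * nrm z ^ (d - i)"
      by (simp add: abs_value_mult abs_value_power)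
    also have "\<dots> \<le> nrm z ^ i / (2 * real d) * nrm z ^ (d - i)"
      using assms i by (intro mult_right_mono) (auto simp: field_simps abs_value_nonneg)
    also have "\<dots> = nrm z ^ d / (2 * real d)"
      using i by (simp flip: power_add)
    finally show ?thesis .
  qed
  have "nrm (Pfam d \<alpha> t z - z ^ d) \<le> (\<Sum>i=1..d. nrm (\<alpha> i t * z ^ (d - i)))"
    unfolding Pfam_def by (simp add: abs_value_sum_le)
  also have "\<dots> \<le> (\<Sum>i=1..d. nrm z ^ d / (2 * real d))" by (intro sum_mono term_bound)
  also have "\<dots> \<le> nrm z ^ d / 2" by (cases "d = 0") simp_all
  finally show ?thesis .
qed

lemma Pfam_at_large_pole:
  assumes coeff: "\<forall>i\<in>{1..d}. nrm (\<alpha> i t) \<le> B * inverse (nrm t) ^ M" and B: "0 \<le> B"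
    and n0: "2 * real d * B \<le> 2 ^ n0" and l: "M + n0 < l" and d: "1 \<le> d"
    and t: "0 < nrm t" "nrm t \<le> 1/2" and h: "nrm h \<le> 1/2"
    and a_def: "a = inverse t ^ l * (1 + h)"
  shows "Pfam d \<alpha> t a \<noteq> 0" and "\<bar>ln (nrm (Pfam d \<alpha> t a)) / real d - ln (nrm a)\<bar> \<le> 1"
proof -
  have u: "1/2 \<le> nrm (1 + h)"
    using abs_value_add_small(1)[of h 1] h by (simp add: abs_value_one)
  have "2 * real d * nrm (\<alpha> i t) \<le> nrm a ^ i" if i: "i \<in> {1..d}" for i
    unfolding a_def using large_pole_dominates[OF t u _ B n0 _ l] coeff i by auto
  then have "nrm (Pfam d \<alpha> t a - a ^ d) \<le> nrm (a ^ d) / 2"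
    using Pfam_near_leading_term by (simp add: abs_value_power)
  from abs_value_add_small[OF this]
  have P: "nrm a ^ d / 2 \<le> nrm (Pfam d \<alpha> t a)" "nrm (Pfam d \<alpha> t a) \<le> 3/2 * nrm a ^ d"
    by (simp_all add: abs_value_power)
  have "0 < nrm a"
    using u t unfolding a_def by (simp add: abs_value_mult abs_value_power abs_value_inverse)
  then have "0 < nrm (Pfam d \<alpha> t a)" using P(1) zero_less_power[of "nrm a" d] by linarith
  then show "Pfam d \<alpha> t a \<noteq> 0" by (auto simp: abs_value_zero)
  show "\<bar>ln (nrm (Pfam d \<alpha> t a)) / real d - ln (nrm a)\<bar> \<le> 1"
    using ln_root_ratio_bound[OF \<open>0 < nrm a\<close> d P] .
qed

end

theorem lemma2p1:
  fixes nrm :: "'a::field \<Rightarrow> real"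
    and d :: nat
    and \<alpha> :: "nat \<Rightarrow> 'a \<Rightarrow> 'a"
  assumes "complete_metrized_acf nrm"
    and "d \<ge> 2"
    and "\<forall>i\<in>{1..d}. meromorphic_D0 nrm (\<alpha> i)"
  shows "\<exists>C>0. \<exists>N::nat\<ge>1. \<forall>l::nat. \<forall>h::'a \<Rightarrow> 'a.
           l \<ge> N \<and> analytic_D nrm h \<and> h 0 = 0 \<and> (\<forall>t. nrm t < 1 \<longrightarrow> nrm (h t) \<le> 1/2) \<longrightarrow>
           (\<forall>t. 0 < nrm t \<and> nrm t \<le> 1/2 \<longrightarrow>
              (let a = inverse t ^ l * (1 + h t) in
                 Pfam d \<alpha> t a \<noteq> 0 \<and>
                 \<bar>ln (nrm (Pfam d \<alpha> t a)) / real d - ln (nrm a)\<bar> \<le> C))"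
proof -
  have av: "is_abs_value nrm" using assms(1) unfolding complete_metrized_acf_def by blast
  obtain M B where B: "0 \<le> B"
    and coeff: "\<forall>i\<in>{1..d}. \<forall>t. 0 < nrm t \<and> nrm t \<le> 1/2 \<longrightarrow> nrm (\<alpha> i t) \<le> B * inverse (nrm t) ^ M"
    using meromorphic_D0_uniform_pole_bound[OF av _ assms(3), of "1/2"] by auto
  obtain n0 where "2 * real d * B < 2 ^ n0" using real_arch_pow[of 2] by auto
  then have "Pfam d \<alpha> t a \<noteq> 0 \<and> \<bar>ln (nrm (Pfam d \<alpha> t a)) / real d - ln (nrm a)\<bar> \<le> 1"
    if "Suc (M + n0) \<le> l" "nrm (h t) \<le> 1/2" "0 < nrm t" "nrm t \<le> 1/2"
      and "a = inverse t ^ l * (1 + h t)" for l h t a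
    using Pfam_at_large_pole[OF av _ B, of d \<alpha> t M n0 l "h t" a] coeff that assms(2) by auto
  then show ?thesis
    by (intro exI[of _ 1] conjI zero_less_one exI[of _ "Suc (M + n0)"]) (auto simp: Let_def)
qed

end
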